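(* Let $k\geqslant2$ and let $f$ be a $k$-regular sequence such that $\rho=\rho({\bf B})$ is the unique dominant eigenvalue of ${\bf B}$ and $\rho({\bf B})>\rho^*(\mathcal B)$. Let ${\bf F}:\mathbb R\to\mathbb R^d$ be the solution of the dilation equation $${\bf F}(x)=\sum_{a=0}^{k-1}\rho^{-1}{\bf B}_a{\bf F}(kx-a),\qquad {\bf F}(x)={\bf 0}\ (x\leqslant0),\quad {\bf F}(x)={\bf v}_\rho\ (x\geqslant1).$$ For $j\in\{0,\dots,k-1\}$ define $S_j:\mathbb R^{d+1}\to\mathbb R^{d+1}$ by $$S_j(y_0,{\bf y})=\Big(\tfrac{y_0+j}{k},\ \rho^{-1}{\bf B}_j{\bf y}+\sum_{a=0}^{j-1}\rho^{-1}{\bf B}_a{\bf v}_\rho\Big),\qquad y_0\in\mathbb R,\ {\bf y}\in\mathbb R^d.$$ Then the graph $\mathcal F_f=\{(x,{\bf F}(x)):x\in[0,1]\}$ satisfies $\mathcal F_f=\bigcup_{j=0}^{k-1}S_j(\mathcal F_f)$; that is, $\mathcal F_f$ is the self-affine set (attractor) of the iterated function system $\{S_0,\dots,S_{k-1}\}$.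
   Context: Let $k\geqslant2$. An integer sequence $f=(f(m))_{m\geqslant0}$ is $k$-regular if the $\mathbb Q$-vector space spanned by its $k$-kernel $\{(f(k^\ell n+r))_{n\geqslant0}:\ell\geqslant0,\ 0\leqslant r<k^\ell\}$ is finite-dimensional. Fix a basis $f=f_1,\dots,f_d$ of this space of integer sequences and put ${\bf f}(m)=(f_1(m),\dots,f_d(m))$ (row vector). The digit matrices ${\bf B}_0,\dots,{\bf B}_{k-1}\in\mathbb Z^{d\times d}$ are defined by ${\bf f}(km+a)={\bf f}(m){\bf B}_a$ for all $m\geqslant0$, $0\leqslant a<k$; $\mathcal B=\{{\bf B}_0,\dots,{\bf B}_{k-1}\}$ and ${\bf B}=\sum_a{\bf B}_a$. $\rho({\bf M})$ denotes spectral radius; the joint spectral radius is $\rho^*(\mathcal B)=\limsup_{n\to\infty}\max_{i_0,\dots,i_{n-1}}\|{\bf B}_{i_0}\cdots{\bf B}_{i_{n-1}}\|^{1/n}$ (operator norm). "$\rho({\bf B})$ is the unique dominant eigenvalue" means $\rho=\rho({\bf B})$ is a simple eigenvalue of ${\bf B}$ and every other eigenvalue has modulus $<\rho$; ${\bf v}_\rho$ is a fixed column eigenvector with ${\bf B}{\bf v}_\rho=\rho{\bf v}_\rho$. Under $\rho>\rho^*(\mathcal B)$ the dilation equation above has a unique (continuous) solution ${\bf F}$. A self-affine set is the attractor (unique nonempty compact $K$ with $K=\bigcup_iS_i(K)$) of finitely many ($\geqslant2$) affine contractions. *)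

theory Defs
  imports "HOL-Analysis.Analysis" "HOL-Computational_Algebra.Polynomial"
    "HOL-Library.Liminf_Limsup"
begin

definition k_kernel :: "nat \<Rightarrow> (nat \<Rightarrow> int) \<Rightarrow> (nat \<Rightarrow> rat) set" where
  "k_kernel k f = {(\<lambda>n. rat_of_int (f (k ^ l * n + r))) | l r. r < k ^ l}"

definition rat_span :: "(nat \<Rightarrow> rat) set \<Rightarrow> (nat \<Rightarrow> rat) set" where
  "rat_span A = {g. \<exists>S c. finite S \<and> S \<subseteq> A \<and> g = (\<lambda>n. \<Sum>h\<in>S. c h * h n)}"

text \<open>k-regular: the Q-span of the k-kernel is finite-dimensional, i.e. contained in the span
  of finitely many sequences.\<close>
definition k_regular :: "nat \<Rightarrow> (nat \<Rightarrow> int) \<Rightarrow> bool" where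
  "k_regular k f \<longleftrightarrow> (\<exists>G. finite G \<and> k_kernel k f \<subseteq> rat_span G)"

definition rat_seq :: "(nat \<Rightarrow> int) \<Rightarrow> nat \<Rightarrow> rat" where
  "rat_seq g = (\<lambda>n. rat_of_int (g n))"

definition kernel_basis :: "nat \<Rightarrow> (nat \<Rightarrow> int) \<Rightarrow> ('d::finite \<Rightarrow> nat \<Rightarrow> int) \<Rightarrow> bool" where
  "kernel_basis k f fs \<longleftrightarrow>
     (\<forall>i. rat_seq (fs i) \<in> rat_span (k_kernel k f)) \<and>
     (\<forall>g\<in>k_kernel k f. g \<in> rat_span (range (\<lambda>i. rat_seq (fs i)))) \<and>
     (\<forall>c :: 'd \<Rightarrow> rat. (\<forall>n. (\<Sum>i\<in>UNIV. c i * rat_of_int (fs i n)) = 0) \<longrightarrow> (\<forall>i. c i = 0))"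

definition fvec :: "('d::finite \<Rightarrow> nat \<Rightarrow> int) \<Rightarrow> nat \<Rightarrow> int ^ 'd" where
  "fvec fs m = (\<chi> i. fs i m)"

definition real_mat :: "int ^ 'n ^ 'm \<Rightarrow> real ^ 'n ^ 'm" where
  "real_mat M = (\<chi> i j. real_of_int (M $ i $ j))"

definition charpoly :: "real ^ 'n ^ 'n \<Rightarrow> real poly" where
  "charpoly M = det (\<chi> i j. (if i = j then [:- (M $ i $ j), 1:] else [:- (M $ i $ j):]))"

definition complex_charpoly :: "real ^ 'n ^ 'n \<Rightarrow> complex poly" where
  "complex_charpoly M = map_poly complex_of_real (charpoly M)"

definition spec_rad :: "real ^ 'n ^ 'n \<Rightarrow> real" where
  "spec_rad M = Max (norm ` {z. poly (complex_charpoly M) z = 0})"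

definition unique_dominant_eigenvalue :: "real ^ 'n ^ 'n \<Rightarrow> real \<Rightarrow> bool" where
  "unique_dominant_eigenvalue M \<rho> \<longleftrightarrow>
     order (complex_of_real \<rho>) (complex_charpoly M) = 1 \<and>
     (\<forall>z. poly (complex_charpoly M) z = 0 \<and> z \<noteq> complex_of_real \<rho> \<longrightarrow> norm z < \<rho>)"

definition word_prod :: "(nat \<Rightarrow> real ^ 'n ^ 'n) \<Rightarrow> nat list \<Rightarrow> real ^ 'n ^ 'n" where
  "word_prod Bs w = foldr (\<lambda>a P. Bs a ** P) w (mat 1)"

definition jsr :: "nat \<Rightarrow> (nat \<Rightarrow> real ^ 'n ^ 'n) \<Rightarrow> ereal" where
  "jsr k Bs = limsup (\<lambda>n. ereal (Max ((\<lambda>w. onorm (\<lambda>x. word_prod Bs w *v x) powr (1 / real n))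
        ` {w. length w = n \<and> set w \<subseteq> {..<k}})))"

definition Smap :: "nat \<Rightarrow> (nat \<Rightarrow> real ^ 'n ^ 'n) \<Rightarrow> real \<Rightarrow> real ^ 'n \<Rightarrow> nat
    \<Rightarrow> real \<times> (real ^ 'n) \<Rightarrow> real \<times> (real ^ 'n)" where
  "Smap k Bs \<rho> v j = (\<lambda>(y0, y). ((y0 + real j) / real k,
      (1 / \<rho>) *\<^sub>R (Bs j *v y) + (\<Sum>a<j. (1 / \<rho>) *\<^sub>R (Bs a *v v))))"

end

theory Submission
  imports Defs
begin

text \<open>
  In the dilation equation evaluated at \<open>(x + j) / k\<close> with \<open>x \<in> [0, 1]\<close>, the terms with
  \<open>a > j\<close> vanish (their argument is \<open>\<le> 0\<close>) and those with \<open>a < j\<close> equal \<open>\<rho>\<^sup>-\<^sup>1 B\<^sub>a v\<close> (their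
  argument is \<open>\<ge> 1\<close>), so \<open>S\<^sub>j (x, F x) = ((x + j) / k, F ((x + j) / k))\<close>; as the intervals
  \<open>[j/k, (j+1)/k]\<close> cover \<open>[0, 1]\<close>, the graph is invariant under the IFS.
  For uniqueness, the composition of the \<open>S\<^sub>j\<close> along a word \<open>w\<close> of length \<open>n\<close> is Lipschitz with
  constant \<open>k\<^sup>-\<^sup>n + \<rho>\<^sup>-\<^sup>n \<parallel>B\<^sub>w\<parallel>\<close>, which tends to 0 uniformly in \<open>w\<close> because \<open>\<rho> > \<rho>\<^sup>*\<close>. Every point
  of a compact invariant set \<open>K\<close> is the image of a point of \<open>K\<close> under such a long composition,
  hence lies close to the image of a point of any other compact invariant set \<open>L\<close>, which is
  again in \<open>L\<close>; so \<open>K \<subseteq> L\<close> and, by symmetry, \<open>K = L\<close>.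
\<close>

definition words :: "nat \<Rightarrow> nat \<Rightarrow> nat list set" where
  "words k n = {w. length w = n \<and> set w \<subseteq> {..<k}}"

definition word_map :: "(nat \<Rightarrow> 'a \<Rightarrow> 'a) \<Rightarrow> nat list \<Rightarrow> 'a \<Rightarrow> 'a" where
  "word_map T w = foldr (\<lambda>j g. T j \<circ> g) w id"

definition eventually_contracting :: "nat \<Rightarrow> (nat \<Rightarrow> 'a::metric_space \<Rightarrow> 'a) \<Rightarrow> bool" where
  "eventually_contracting k T \<longleftrightarrow>
     (\<forall>e>0. \<exists>n. \<forall>w\<in>words k n. \<forall>p q. dist (word_map T w p) (word_map T w q) \<le> e * dist p q)"

lemma finite_words: "finite (words k n)"
proof -
  have "words k n = {w. set w \<subseteq> {..<k} \<and> length w = n}" by (auto simp: words_def)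
  then show ?thesis by (simp add: finite_lists_length_eq)
qed

lemma replicate_in_words: "k > 0 \<Longrightarrow> replicate n 0 \<in> words k n"
  by (auto simp: words_def)

lemma word_map_Nil [simp]: "word_map T [] = id"
  by (simp add: word_map_def)

lemma word_map_Cons [simp]: "word_map T (j # w) = T j \<circ> word_map T w"
  by (simp add: word_map_def)

lemma word_map_append_singleton: "word_map T (w @ [j]) = word_map T w \<circ> T j"
  by (induction w) auto

lemma self_covering_imp_word_preimage:
  assumes "A \<subseteq> (\<Union>j<k. T j ` A)" "p \<in> A"
  shows "\<exists>w\<in>words k n. \<exists>q\<in>A. p = word_map T w q"
proof (induction n)
  case 0
  show ?case using assms(2) by (auto simp: words_def)
next
  case (Suc n)
  then obtain w q where w: "w \<in> words k n" "q \<in> A" "p = word_map T w q" by blast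
  then obtain j q' where j: "j < k" "q' \<in> A" "q = T j q'" using assms(1) by blast
  have "w @ [j] \<in> words k (Suc n)" using w(1) j(1) by (auto simp: words_def)
  then show ?case
    using w j by (intro bexI[of _ "w @ [j]"] bexI[of _ q']) (auto simp: word_map_append_singleton)
qed

lemma word_map_image_subset:
  assumes "\<forall>j<k. T j ` B \<subseteq> B" "set w \<subseteq> {..<k}"
  shows "word_map T w ` B \<subseteq> B"
  using assms(2)
proof (induction w)
  case Nil
  then show ?case by simp
next
  case (Cons j w)
  then have "word_map T w ` B \<subseteq> B" "j < k" by auto
  then show ?case using assms(1) by (auto simp: image_subset_iff)
qed

lemma eventually_contracting_self_covering_subset:
  fixes T :: "nat \<Rightarrow> 'a::metric_space \<Rightarrow> 'a"
  assumes contr: "eventually_contracting k T"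
    and A: "A \<subseteq> (\<Union>j<k. T j ` A)" and B: "\<forall>j<k. T j ` B \<subseteq> B"
    and "closed B" "B \<noteq> {}" "bounded (A \<union> B)"
  shows "A \<subseteq> B"
proof
  fix p assume p: "p \<in> A"
  obtain b where b: "b \<in> B" using \<open>B \<noteq> {}\<close> by blast
  obtain D where D: "\<forall>x\<in>A \<union> B. \<forall>y\<in>A \<union> B. dist x y \<le> D"
    using \<open>bounded (A \<union> B)\<close> unfolding bounded_two_points by blast
  have "D \<ge> 0" using D b by (metis UnI2 dist_self)
  have "\<exists>y\<in>B. dist y p < e" if "e > 0" for e
  proof -
    have e': "e / (D + 1) > 0" using \<open>e > 0\<close> \<open>D \<ge> 0\<close> by simp
    then obtain n where n: "\<forall>w\<in>words k n. \<forall>p q.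
        dist (word_map T w p) (word_map T w q) \<le> e / (D + 1) * dist p q"
      using contr unfolding eventually_contracting_def by blast
    obtain w q where w: "w \<in> words k n" "q \<in> A" "p = word_map T w q"
      using self_covering_imp_word_preimage[OF A p] by blast
    have "word_map T w b \<in> B"
      using word_map_image_subset[OF B] w(1) b by (auto simp: words_def)
    moreover have "dist (word_map T w b) p \<le> e / (D + 1) * dist q b"
      using n w by (metis dist_commute)
    moreover have "e / (D + 1) * dist q b \<le> e / (D + 1) * D"
      using D w(2) b e' by (intro mult_left_mono) auto
    moreover have "e / (D + 1) * D < e" using \<open>e > 0\<close> \<open>D \<ge> 0\<close> by (simp add: field_simps)
    ultimately show ?thesis by force
  qed
  then show "p \<in> B" using closed_approachable[OF \<open>closed B\<close>] by blast
qed

lemma eventually_contracting_attractor_unique: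
  fixes T :: "nat \<Rightarrow> 'a::metric_space \<Rightarrow> 'a"
  assumes "eventually_contracting k T"
    and K: "compact K" "K \<noteq> {}" "K = (\<Union>j<k. T j ` K)"
    and L: "compact L" "L \<noteq> {}" "L = (\<Union>j<k. T j ` L)"
  shows "K = L"
proof -
  have "bounded (K \<union> L)" "bounded (L \<union> K)" using K L by (simp_all add: compact_imp_bounded)
  moreover have "\<forall>j<k. T j ` K \<subseteq> K" "\<forall>j<k. T j ` L \<subseteq> L" using K L by blast+
  ultimately show ?thesis
    using eventually_contracting_self_covering_subset[OF assms(1), of K L]
      eventually_contracting_self_covering_subset[OF assms(1), of L K] K L
    by (auto simp: compact_imp_closed)
qed

lemma Smap_diff:
  "Smap k M \<rho> v j p - Smap k M \<rho> v j q =
     ((fst p - fst q) / real k, (1 / \<rho>) *\<^sub>R (M j *v (snd p - snd q)))"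
  by (cases p; cases q) (simp add: Smap_def diff_divide_distrib add_divide_distrib
      matrix_vector_mult_diff_distrib scaleR_diff_right)

lemma word_map_Smap_diff:
  "word_map (Smap k M \<rho> v) w p - word_map (Smap k M \<rho> v) w q =
     ((fst p - fst q) / real k ^ length w, (1 / \<rho>) ^ length w *\<^sub>R (word_prod M w *v (snd p - snd q)))"
proof (induction w)
  case Nil
  then show ?case by (simp add: word_prod_def prod_eq_iff)
next
  case (Cons j w)
  let ?S = "word_map (Smap k M \<rho> v) w"
  have "word_map (Smap k M \<rho> v) (j # w) p - word_map (Smap k M \<rho> v) (j # w) q
      = ((fst (?S p) - fst (?S q)) / real k, (1 / \<rho>) *\<^sub>R (M j *v (snd (?S p) - snd (?S q))))"
    by (simp add: Smap_diff)
  also have "\<dots> = ((fst p - fst q) / real k ^ length (j # w),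
      (1 / \<rho>) ^ length (j # w) *\<^sub>R (word_prod M (j # w) *v (snd p - snd q)))"
    using Cons by (simp add: prod_eq_iff word_prod_def matrix_vector_mult_scaleR matrix_vector_mul_assoc)
  finally show ?case .
qed

lemma word_map_Smap_lipschitz:
  assumes "\<rho> > 0"
  shows "dist (word_map (Smap k M \<rho> v) w p) (word_map (Smap k M \<rho> v) w q)
     \<le> (1 / real k ^ length w + (1 / \<rho>) ^ length w * onorm (\<lambda>x. word_prod M w *v x)) * dist p q"
proof -
  let ?n = "length w" and ?o = "onorm (\<lambda>x. word_prod M w *v x)"
  have "?o \<ge> 0" by (rule onorm_pos_le[OF matrix_vector_mul_bounded_linear])
  have "dist (word_map (Smap k M \<rho> v) w p) (word_map (Smap k M \<rho> v) w q)
      \<le> norm ((fst p - fst q) / real k ^ ?n) + norm ((1 / \<rho>) ^ ?n *\<^sub>R (word_prod M w *v (snd p - snd q)))"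
    unfolding dist_norm word_map_Smap_diff by (rule norm_Pair_le)
  also have "\<dots> \<le> dist (fst p) (fst q) / real k ^ ?n + (1 / \<rho>) ^ ?n * (?o * dist (snd p) (snd q))"
    using onorm[OF matrix_vector_mul_bounded_linear, of "word_prod M w" "snd p - snd q"] assms
    by (auto simp: dist_norm intro: mult_left_mono)
  also have "\<dots> \<le> dist p q / real k ^ ?n + (1 / \<rho>) ^ ?n * (?o * dist p q)"
    using dist_fst_le[of p q] dist_snd_le[of p q] assms \<open>?o \<ge> 0\<close>
    by (intro add_mono divide_right_mono mult_left_mono) auto
  finally show ?thesis by (simp add: algebra_simps)
qed

lemma jsr_nonneg:
  assumes "k > 0"
  shows "0 \<le> jsr k M"
proof -
  have "0 \<le> Max ((\<lambda>w. onorm (\<lambda>x. word_prod M w *v x) powr (1 / real n)) ` words k n)" for n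
  proof -
    have "onorm (\<lambda>x. word_prod M (replicate n 0) *v x) powr (1 / real n)
        \<le> Max ((\<lambda>w. onorm (\<lambda>x. word_prod M w *v x) powr (1 / real n)) ` words k n)"
      using replicate_in_words[OF assms, of n] finite_words by (intro Max_ge) auto
    then show ?thesis by (meson order_trans powr_ge_zero)
  qed
  then show ?thesis
    unfolding jsr_def words_def[symmetric] by (intro le_Limsup always_eventually) auto
qed

lemma jsr_less_imp_eventually_onorm_le:
  assumes "jsr k M < ereal r"
  shows "\<forall>\<^sub>F n in sequentially. \<forall>w\<in>words k n. onorm (\<lambda>x. word_prod M w *v x) \<le> r ^ n"
proof -
  have "\<forall>\<^sub>F n in sequentially. ereal (Max ((\<lambda>w. onorm (\<lambda>x. word_prod M w *v x) powr (1 / real n))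
      ` words k n)) < ereal r"
    using Limsup_lessD[OF assms[unfolded jsr_def]] by (simp add: words_def)
  moreover have "\<forall>\<^sub>F n in sequentially. n > 0" by (rule eventually_gt_at_top)
  ultimately show ?thesis
  proof eventually_elim
    case (elim n)
    show ?case
    proof
      fix w assume "w \<in> words k n"
      let ?o = "onorm (\<lambda>x. word_prod M w *v x)"
      have "?o \<ge> 0" by (rule onorm_pos_le[OF matrix_vector_mul_bounded_linear])
      have "?o powr (1 / real n)
          \<le> Max ((\<lambda>w. onorm (\<lambda>x. word_prod M w *v x) powr (1 / real n)) ` words k n)"
        using finite_words \<open>w \<in> words k n\<close> by (intro Max_ge) auto
      then have "?o powr (1 / real n) \<le> r" using elim(1) by simp
      then have "(?o powr (1 / real n)) ^ n \<le> r ^ n" by (intro power_mono) auto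
      then show "?o \<le> r ^ n"
        using elim(2) \<open>?o \<ge> 0\<close> by (simp add: root_powr_inverse[symmetric])
    qed
  qed
qed

lemma word_map_Smap_lipschitz_geometric:
  assumes "\<rho> > 0" and "onorm (\<lambda>x. word_prod M w *v x) \<le> r ^ length w"
  shows "dist (word_map (Smap k M \<rho> v) w p) (word_map (Smap k M \<rho> v) w q)
     \<le> ((1 / real k) ^ length w + (r / \<rho>) ^ length w) * dist p q"
proof -
  have "(1 / \<rho>) ^ length w * onorm (\<lambda>x. word_prod M w *v x) \<le> (1 / \<rho>) ^ length w * r ^ length w"
    using assms by (intro mult_left_mono) auto
  then have "1 / real k ^ length w + (1 / \<rho>) ^ length w * onorm (\<lambda>x. word_prod M w *v x)
      \<le> (1 / real k) ^ length w + (r / \<rho>) ^ length w"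
    by (simp add: power_one_over power_divide)
  have "dist (word_map (Smap k M \<rho> v) w p) (word_map (Smap k M \<rho> v) w q)
      \<le> (1 / real k ^ length w + (1 / \<rho>) ^ length w * onorm (\<lambda>x. word_prod M w *v x)) * dist p q"
    by (rule word_map_Smap_lipschitz[OF assms(1)])
  also have "\<dots> \<le> ((1 / real k) ^ length w + (r / \<rho>) ^ length w) * dist p q"
    by (rule mult_right_mono[OF _ zero_le_dist]) fact
  finally show ?thesis .
qed

lemma Smap_eventually_contracting:
  assumes "k \<ge> 2" and "jsr k M < ereal \<rho>"
  shows "eventually_contracting k (Smap k M \<rho> v)"
  unfolding eventually_contracting_def
proof (intro allI impI)
  fix e :: real assume "e > 0"
  obtain r where r: "jsr k M < ereal r" "r < \<rho>" using ereal_dense2[OF assms(2)] by auto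
  have "0 \<le> jsr k M" using assms(1) by (intro jsr_nonneg) simp
  then have "0 < ereal r" using r(1) by (rule order.strict_trans1)
  then have "r > 0" by simp
  have "(\<lambda>n. (1 / real k) ^ n + (r / \<rho>) ^ n) \<longlonglongrightarrow> 0 + 0"
    using assms(1) \<open>r > 0\<close> r(2) by (intro tendsto_add LIMSEQ_power_zero) auto
  then have "\<forall>\<^sub>F n in sequentially. (1 / real k) ^ n + (r / \<rho>) ^ n < e"
    using order_tendstoD(2) \<open>e > 0\<close> by simp
  then have "\<forall>\<^sub>F n in sequentially. (1 / real k) ^ n + (r / \<rho>) ^ n < e \<and>
      (\<forall>w\<in>words k n. onorm (\<lambda>x. word_prod M w *v x) \<le> r ^ n)"
    using jsr_less_imp_eventually_onorm_le[OF r(1)] by (rule eventually_conj)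
  then obtain n where n: "(1 / real k) ^ n + (r / \<rho>) ^ n < e"
      "\<forall>w\<in>words k n. onorm (\<lambda>x. word_prod M w *v x) \<le> r ^ n"
    by (auto simp: eventually_sequentially)
  have "dist (word_map (Smap k M \<rho> v) w p) (word_map (Smap k M \<rho> v) w q) \<le> e * dist p q"
    if "w \<in> words k n" for w p q
  proof -
    have "length w = n" using that by (simp add: words_def)
    then have "dist (word_map (Smap k M \<rho> v) w p) (word_map (Smap k M \<rho> v) w q)
        \<le> ((1 / real k) ^ n + (r / \<rho>) ^ n) * dist p q"
      using word_map_Smap_lipschitz_geometric[of \<rho> M w r k v p q] n(2) that \<open>r > 0\<close> r(2) by simp
    also have "\<dots> \<le> e * dist p q" using n(1) by (intro mult_right_mono) auto
    finally show ?thesis .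
  qed
  then show "\<exists>n. \<forall>w\<in>words k n. \<forall>p q.
      dist (word_map (Smap k M \<rho> v) w p) (word_map (Smap k M \<rho> v) w q) \<le> e * dist p q"
    by blast
qed

lemma Smap_graph_point:
  fixes F :: "real \<Rightarrow> real ^ 'n"
  assumes "k > 0"
    and dil: "\<forall>x. F x = (\<Sum>a<k. (1 / \<rho>) *\<^sub>R (M a *v F (real k * x - real a)))"
    and F0: "\<forall>x \<le> 0. F x = 0" and F1: "\<forall>x \<ge> 1. F x = v"
    and x: "x \<in> {0..1}" and "j < k"
  shows "Smap k M \<rho> v j (x, F x) = ((x + real j) / real k, F ((x + real j) / real k))"
proof -
  let ?y = "(x + real j) / real k"
  let ?g = "\<lambda>a. (1 / \<rho>) *\<^sub>R (M a *v F (real k * ?y - real a))"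
  have ky: "real k * ?y = x + real j" using \<open>k > 0\<close> by simp
  have "F ?y = sum ?g {..<k}" using dil by blast
  also have "\<dots> = sum ?g {..<j} + sum ?g {j..<k}"
    using \<open>j < k\<close> by (simp add: lessThan_atLeast0 sum.atLeastLessThan_concat)
  also have "sum ?g {j..<k} = ?g j + sum ?g {Suc j..<k}"
    using \<open>j < k\<close> by (simp add: sum.atLeast_Suc_lessThan)
  also have "sum ?g {Suc j..<k} = 0"
    using F0 x unfolding ky by (intro sum.neutral) auto
  also have "?g j = (1 / \<rho>) *\<^sub>R (M j *v F x)" unfolding ky by simp
  also have "sum ?g {..<j} = (\<Sum>a<j. (1 / \<rho>) *\<^sub>R (M a *v v))"
    using F1 x unfolding ky by (intro sum.cong) auto
  finally show ?thesis unfolding Smap_def by simp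
qed

lemma unit_interval_digit_decomposition:
  assumes "k > 0" "y \<in> {0..1}"
  obtains j x where "j < k" "x \<in> {0..1}" "y = (x + real j) / real k"
proof (cases "y = 1")
  case True
  then show ?thesis using that[of "k - 1" 1] assms(1) by (auto simp: of_nat_diff)
next
  case False
  define j where "j = nat \<lfloor>real k * y\<rfloor>"
  have "real k * y < real k" using assms False by simp
  then have "j < k" using assms unfolding j_def by (simp add: nat_less_iff floor_less_iff)
  have "real j = of_int \<lfloor>real k * y\<rfloor>" using assms unfolding j_def by simp
  then have "real j \<le> real k * y" "real k * y < real j + 1" by linarith+
  then show ?thesis using that[of j "real k * y - real j"] \<open>j < k\<close> assms(1) by auto
qed

lemma graph_eq_Smap_union:
  fixes F :: "real \<Rightarrow> real ^ 'n"
  assumes "k > 0"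
    and dil: "\<forall>x. F x = (\<Sum>a<k. (1 / \<rho>) *\<^sub>R (M a *v F (real k * x - real a)))"
    and F0: "\<forall>x \<le> 0. F x = 0" and F1: "\<forall>x \<ge> 1. F x = v"
  shows "(\<lambda>x. (x, F x)) ` {0..1} = (\<Union>j<k. Smap k M \<rho> v j ` (\<lambda>x. (x, F x)) ` {0..1})"
    (is "?G = _")
proof
  have "Smap k M \<rho> v j (x, F x) \<in> ?G" if "j < k" "x \<in> {0..1}" for j x
  proof -
    have "x + real j \<le> real k" using that by auto
    then have "(x + real j) / real k \<in> {0..1}" using that by simp
    then show ?thesis using Smap_graph_point[OF assms that(2,1)] by auto
  qed
  then show "(\<Union>j<k. Smap k M \<rho> v j ` ?G) \<subseteq> ?G" by blast
  have "(y, F y) \<in> (\<Union>j<k. Smap k M \<rho> v j ` ?G)" if y: "y \<in> {0..1}" for y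
  proof -
    obtain j x where jx: "j < k" "x \<in> {0..1}" "y = (x + real j) / real k"
      using unit_interval_digit_decomposition[OF \<open>k > 0\<close> y] by blast
    then have "(y, F y) = Smap k M \<rho> v j (x, F x)" using Smap_graph_point[OF assms] by simp
    then show ?thesis using jx by blast
  qed
  then show "?G \<subseteq> (\<Union>j<k. Smap k M \<rho> v j ` ?G)" by blast
qed

theorem theorem2:
  fixes k :: nat and f :: "nat \<Rightarrow> int" and fs :: "'d::finite \<Rightarrow> nat \<Rightarrow> int" and i0 :: 'd
    and B :: "nat \<Rightarrow> int ^ 'd ^ 'd" and \<rho> :: real and v :: "real ^ 'd"
    and F :: "real \<Rightarrow> real ^ 'd"
  assumes k2: "k \<ge> 2"
    and reg: "k_regular k f"
    and basis: "kernel_basis k f fs" and first: "fs i0 = f"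
    and digit: "\<forall>m a. a < k \<longrightarrow> fvec fs (k * m + a) = fvec fs m v* B a"
    and rho: "\<rho> = spec_rad (real_mat (\<Sum>a<k. B a))"
    and dom: "unique_dominant_eigenvalue (real_mat (\<Sum>a<k. B a)) \<rho>"
    and jsr: "ereal \<rho> > jsr k (\<lambda>a. real_mat (B a))"
    and eigv: "v \<noteq> 0" "real_mat (\<Sum>a<k. B a) *v v = \<rho> *\<^sub>R v"
    and Fcont: "continuous_on UNIV F"
    and dil: "\<forall>x. F x = (\<Sum>a<k. (1 / \<rho>) *\<^sub>R (real_mat (B a) *v F (real k * x - real a)))"
    and F0: "\<forall>x \<le> 0. F x = 0" and F1: "\<forall>x \<ge> 1. F x = v"
  defines "G \<equiv> {(x, F x) | x. x \<in> {0..1}}"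
  shows "G = (\<Union>j<k. Smap k (\<lambda>a. real_mat (B a)) \<rho> v j ` G)
         \<and> compact G \<and> G \<noteq> {}
         \<and> (\<forall>K. compact K \<and> K \<noteq> {} \<and> K = (\<Union>j<k. Smap k (\<lambda>a. real_mat (B a)) \<rho> v j ` K)
               \<longrightarrow> K = G)"
proof -
  \<comment> \<open>Only the dilation equation with its boundary values, continuity of \<open>F\<close> and \<open>\<rho> > \<rho>\<^sup>*\<close> are
    needed; the other hypotheses describe where \<open>B\<close>, \<open>\<rho>\<close> and \<open>v\<close> come from.\<close>
  have G: "G = (\<lambda>x. (x, F x)) ` {0..1}" unfolding G_def by auto
  have invariant: "G = (\<Union>j<k. Smap k (\<lambda>a. real_mat (B a)) \<rho> v j ` G)"
    unfolding G using graph_eq_Smap_union[OF _ dil F0 F1] k2 by simp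
  have "compact G" unfolding G
    by (intro compact_continuous_image continuous_on_Pair continuous_on_id
        continuous_on_subset[OF Fcont]) auto
  moreover have "G \<noteq> {}" unfolding G by auto
  moreover have "K = G"
    if "compact K" "K \<noteq> {}" "K = (\<Union>j<k. Smap k (\<lambda>a. real_mat (B a)) \<rho> v j ` K)" for K
    using eventually_contracting_attractor_unique[OF Smap_eventually_contracting[OF k2 jsr]
        that \<open>compact G\<close> \<open>G \<noteq> {}\<close> invariant] .
  ultimately show ?thesis using invariant by blast
qed

end
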